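(* Let $\Lambda$ be a lattice, $\phi$ a positive semidefinite quadratic form on $\Lambda\otimes\mathbb{R}$, and $P$ a perfect Delaunay polyhedron in $\mathrm{Del}(\Lambda,\phi)$. Let $\Gamma$ be a sublattice of $\Lambda$ and let $D,D'$ be Delaunay polytopes (of the affine lattices $\Lambda\cap\operatorname{aff}D$, $\Lambda\cap\operatorname{aff}D'$ with respect to the restrictions of $\phi$) such that $\operatorname{vert}P=\operatorname{vert}D\oplus\Gamma=\operatorname{vert}D'\oplus\Gamma$. If $\operatorname{aff}D$ is parallel to $\operatorname{aff}D'$, then $D'=D+\mathbf{u}$ for some $\mathbf{u}\in\Gamma$.
   Context: For a lattice $L$ and positive semidefinite form $\phi$, a Delaunay polyhedron of $\mathrm{Del}(L,\phi)$ is $\operatorname{conv}\mathcal{V}(f)$, where $f$ is a real quadratic polynomial with quadratic part $\phi$, $f\ge0$ on $L$, and $\mathcal{V}(f)=\{\mathbf{z}\in L: f(\mathbf{z})=0\}\ne\emptyset$; its "vertex set" $\operatorname{vert}$ means the set $\mathcal{V}(f)$ of lattice points on it (even when the polyhedron is unbounded). It is perfect if $f$ can be chosen so that every real polynomial of degree at most $2$ vanishing on $\mathcal{V}(f)$ is a scalar multiple of $f$. A Delaunay polytope is a bounded Delaunay polyhedron. The notation $\operatorname{vert}P=\operatorname{vert}D\oplus\Gamma$ means that $\operatorname{vert}P=\{\mathbf{v}+\mathbf{u}:\mathbf{v}\in\operatorname{vert}D,\ \mathbf{u}\in\Gamma\}$ and each element of $\operatorname{vert}P$ has a unique such representation. 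*)

theory Defs
  imports "HOL-Analysis.Analysis"
begin

text \<open>The lattice is taken to be the integer lattice inside real^'n (every lattice is
  isomorphic to Z^n, the form being transported accordingly).\<close>
definition int_lattice :: "(real^'n) set" where
  "int_lattice = {x. \<forall>i. x $ i \<in> \<int>}"

definition qpoly :: "real^'n^'n \<Rightarrow> real^'n \<Rightarrow> real \<Rightarrow> real^'n \<Rightarrow> real" where
  "qpoly A b c x = x \<bullet> (A *v x) + b \<bullet> x + c"

definition psd_form :: "real^'n^'n \<Rightarrow> bool" where
  "psd_form Q \<longleftrightarrow> transpose Q = Q \<and> (\<forall>x. 0 \<le> x \<bullet> (Q *v x))"

definition zero_set :: "(real^'n) set \<Rightarrow> (real^'n \<Rightarrow> real) \<Rightarrow> (real^'n) set" where
  "zero_set L f = {z \<in> L. f z = 0}"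

definition delaunay_polyhedron ::
  "(real^'n) set \<Rightarrow> real^'n^'n \<Rightarrow> (real^'n) set \<Rightarrow> bool" where
  "delaunay_polyhedron L Q P \<longleftrightarrow>
     (\<exists>b c. (\<forall>z\<in>L. 0 \<le> qpoly Q b c z) \<and> zero_set L (qpoly Q b c) \<noteq> {} \<and>
            P = convex hull (zero_set L (qpoly Q b c)))"

definition perfect_delaunay ::
  "(real^'n) set \<Rightarrow> real^'n^'n \<Rightarrow> (real^'n) set \<Rightarrow> bool" where
  "perfect_delaunay L Q P \<longleftrightarrow>
     (\<exists>b c. (\<forall>z\<in>L. 0 \<le> qpoly Q b c z) \<and> zero_set L (qpoly Q b c) \<noteq> {} \<and>
            P = convex hull (zero_set L (qpoly Q b c)) \<and>
            (\<forall>A b' c'. (\<forall>z \<in> zero_set L (qpoly Q b c). qpoly A b' c' z = 0) \<longrightarrow>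
                (\<exists>k::real. \<forall>x. qpoly A b' c' x = k * qpoly Q b c x)))"

text \<open>D is a Delaunay polytope of the affine lattice L \<inter> aff D w.r.t. the restriction
  of phi to aff D (quadratic functions on aff D with quadratic part phi| are exactly
  restrictions of qpoly Q b c).\<close>
definition delaunay_polytope_aff ::
  "(real^'n) set \<Rightarrow> real^'n^'n \<Rightarrow> (real^'n) set \<Rightarrow> bool" where
  "delaunay_polytope_aff L Q D \<longleftrightarrow>
     delaunay_polyhedron (L \<inter> affine hull D) Q D \<and> bounded D"

definition vert :: "(real^'n) set \<Rightarrow> (real^'n) set \<Rightarrow> (real^'n) set" where
  "vert L P = L \<inter> P"

definition sublattice :: "(real^'n) set \<Rightarrow> (real^'n) set \<Rightarrow> bool" where
  "sublattice G L \<longleftrightarrow> G \<subseteq> L \<and> 0 \<in> G \<and> (\<forall>x\<in>G. \<forall>y\<in>G. x + y \<in> G \<and> - x \<in> G)"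

definition direct_sum_eq :: "(real^'n) set \<Rightarrow> (real^'n) set \<Rightarrow> (real^'n) set \<Rightarrow> bool" where
  "direct_sum_eq V W G \<longleftrightarrow>
     V = {v + u | v u. v \<in> W \<and> u \<in> G} \<and>
     (\<forall>v1\<in>W. \<forall>v2\<in>W. \<forall>u1\<in>G. \<forall>u2\<in>G. v1 + u1 = v2 + u2 \<longrightarrow> v1 = v2 \<and> u1 = u2)"

end

theory Submission imports Defs begin

text \<open>Since \<phi> is positive semidefinite, f is convex; being nonnegative on the lattice, it
  vanishes at every lattice point of conv V(f), so vert P = V(f), and this set is
  \<Gamma>-periodic. For u \<in> \<Gamma> the difference f(x + u) - f(x) is affine and vanishes on V(f);
  by perfection it is a multiple of f, and an affine multiple of f with a zero must
  vanish identically, so f is \<Gamma>-invariant. A Delaunay polytope E with vert E \<subseteq> V(f)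
  is cut out of aff E by f itself, because its own defining polynomial has the same
  quadratic part and agrees with f on vert E, hence on aff E. Finally a vertex of D'
  decomposes as w + u with w \<in> vert D and u \<in> \<Gamma>, so aff D' = aff D + u, and the
  \<Gamma>-invariance of f gives D' = D + u.\<close>

lemma qpoly_convex_on:
  fixes Q :: "real^'n^'n"
  assumes "psd_form Q"
  shows "convex_on UNIV (qpoly Q b c)"
proof (rule convex_onI)
  fix t :: real and x y :: "real^'n"
  assume t: "0 < t" "t < 1"
  have "(1-t) * (x \<bullet> (Q *v x)) + t * (y \<bullet> (Q *v y))
      - (((1-t) *\<^sub>R x + t *\<^sub>R y) \<bullet> (Q *v ((1-t) *\<^sub>R x + t *\<^sub>R y)))
      = t * (1-t) * ((x - y) \<bullet> (Q *v (x - y)))"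
    by (simp add: matrix_vector_right_distrib matrix_vector_mult_diff_distrib
        matrix_vector_mult_scaleR inner_add_left inner_add_right inner_diff_left
        inner_diff_right algebra_simps)
  moreover have "0 \<le> t * (1-t) * ((x - y) \<bullet> (Q *v (x - y)))"
    using assms t unfolding psd_form_def by simp
  ultimately show "qpoly Q b c ((1 - t) *\<^sub>R x + t *\<^sub>R y) \<le> (1 - t) * qpoly Q b c x + t * qpoly Q b c y"
    unfolding qpoly_def by (simp add: inner_add_right algebra_simps)
qed simp

lemma inter_convex_hull_zero_set:
  assumes "psd_form Q" and nonneg: "\<forall>z\<in>S. 0 \<le> qpoly Q b c z"
  shows "S \<inter> convex hull (zero_set S (qpoly Q b c)) = zero_set S (qpoly Q b c)"
proof
  have "\<forall>x\<in>convex hull (zero_set S (qpoly Q b c)). qpoly Q b c x \<le> 0"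
    by (rule convex_on_convex_hull_bound)
      (auto intro: convex_on_subset[OF qpoly_convex_on[OF assms(1)]] simp: zero_set_def)
  then show "S \<inter> convex hull (zero_set S (qpoly Q b c)) \<subseteq> zero_set S (qpoly Q b c)"
    using nonneg by (force simp: zero_set_def)
  show "zero_set S (qpoly Q b c) \<subseteq> S \<inter> convex hull (zero_set S (qpoly Q b c))"
    using hull_subset[of "zero_set S (qpoly Q b c)" convex] by (auto simp: zero_set_def)
qed

lemma qpoly_eq_on_affine_hull:
  assumes "\<forall>z\<in>S. qpoly Q b c z = qpoly Q b' c' z" and "x \<in> affine hull S"
  shows "qpoly Q b c x = qpoly Q b' c' x"
proof -
  have "{x. qpoly Q b c x = qpoly Q b' c' x} = {x. (b - b') \<bullet> x = c' - c}"
    unfolding qpoly_def by (auto simp: inner_diff_left algebra_simps)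
  then have "affine {x. qpoly Q b c x = qpoly Q b' c' x}"
    by (simp add: affine_hyperplane)
  then have "affine hull S \<subseteq> {x. qpoly Q b c x = qpoly Q b' c' x}"
    using assms(1) by (intro hull_minimal) auto
  then show ?thesis using assms(2) by auto
qed

lemma qpoly_translate_diff:
  fixes Q :: "real^'n^'n"
  shows "qpoly Q b c (u + x) - qpoly Q b c x = qpoly 0 (Q *v u + u v* Q) (u \<bullet> (Q *v u) + b \<bullet> u) x"
  unfolding qpoly_def
  by (simp add: matrix_vector_right_distrib inner_add_left inner_add_right dot_lmul_matrix
      inner_commute[of x "Q *v u"] algebra_simps)

lemma perfect_qpoly_translation_invariant:
  fixes Q :: "real^'n^'n"
  assumes perfect: "\<forall>A b' c'. (\<forall>z\<in>Z. qpoly A b' c' z = 0) \<longrightarrow>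
                      (\<exists>k::real. \<forall>x. qpoly A b' c' x = k * qpoly Q b c x)"
    and "z\<^sub>0 \<in> Z" and zeros: "\<forall>z\<in>Z. qpoly Q b c z = 0"
    and translated_zeros: "\<forall>z\<in>Z. qpoly Q b c (u + z) = 0"
  shows "qpoly Q b c (u + x) = qpoly Q b c x"
proof -
  define f where "f = qpoly Q b c"
  define B where "B = Q *v u + u v* Q"
  define C where "C = u \<bullet> (Q *v u) + b \<bullet> u"
  define h where "h x = f (u + x) - f x" for x
  have h_qpoly: "h x = qpoly 0 B C x" for x
    unfolding h_def f_def B_def C_def by (rule qpoly_translate_diff)
  then have h_affine: "h x = B \<bullet> x + C" for x by (simp add: qpoly_def)
  have "\<forall>z\<in>Z. qpoly 0 B C z = 0"
    using zeros translated_zeros by (simp add: h_qpoly[symmetric] h_def f_def)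
  then obtain k where h_multiple: "\<And>x. h x = k * f x"
    using perfect unfolding h_qpoly f_def by blast
  \<comment> \<open>h = k f turns k h into h (u + _) - h, a constant since h is affine\<close>
  have k_h: "k * h x = B \<bullet> u" for x
  proof -
    have "h (u + x) - h x = k * (f (u + x) - f x)"
      by (simp add: h_multiple right_diff_distrib)
    then have "k * h x = h (u + x) - h x" by (simp add: h_def)
    then show ?thesis by (simp add: h_affine inner_add_right)
  qed
  have "h z\<^sub>0 = 0" using zeros translated_zeros \<open>z\<^sub>0 \<in> Z\<close> by (simp add: h_def f_def)
  then have "k * h x = 0"
    using k_h[of z\<^sub>0] k_h[of x] by simp
  then have "h x = 0" using h_multiple[of x] by auto
  then show ?thesis by (simp add: h_def f_def)
qed

lemma direct_sum_eq_subset: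
  assumes "direct_sum_eq V W G" and "0 \<in> G"
  shows "W \<subseteq> V"
  using assms unfolding direct_sum_eq_def by force

lemma direct_sum_eq_add_mem:
  assumes "direct_sum_eq V W G" and "sublattice G L" and "v \<in> V" and "u \<in> G"
  shows "u + v \<in> V"
proof -
  obtain w u' where "v = w + u'" "w \<in> W" "u' \<in> G"
    using assms(1,3) unfolding direct_sum_eq_def by blast
  moreover have "u' + u \<in> G" using assms(2,4) \<open>u' \<in> G\<close> unfolding sublattice_def by blast
  moreover have "u + v = w + (u' + u)" using \<open>v = w + u'\<close> by (simp add: algebra_simps)
  ultimately show ?thesis using assms(1) unfolding direct_sum_eq_def by blast
qed

lemma delaunay_polyhedron_nonempty:
  assumes "delaunay_polyhedron L Q P"
  shows "P \<noteq> {}"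
  using assms unfolding delaunay_polyhedron_def by auto

lemma delaunay_polytope_eq_convex_hull_zero_set:
  assumes "delaunay_polyhedron (L \<inter> affine hull E) Q E"
    and "L \<inter> E \<subseteq> zero_set L (qpoly Q b c)"
  shows "E = convex hull zero_set (L \<inter> affine hull E) (qpoly Q b c)"
proof -
  obtain b' c' where E: "E = convex hull zero_set (L \<inter> affine hull E) (qpoly Q b' c')"
    using assms(1) unfolding delaunay_polyhedron_def by blast
  define V where "V = zero_set (L \<inter> affine hull E) (qpoly Q b' c')"
  have "V \<subseteq> L \<inter> E"
    using hull_subset[of V convex] E unfolding V_def zero_set_def by auto
  then have "\<forall>z\<in>V. qpoly Q b' c' z = qpoly Q b c z"
    using assms(2) unfolding V_def zero_set_def by auto
  moreover have "affine hull V = affine hull E"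
    using E unfolding V_def by (metis affine_hull_convex_hull)
  ultimately have "\<forall>z\<in>affine hull E. qpoly Q b' c' z = qpoly Q b c z"
    using qpoly_eq_on_affine_hull by metis
  then have "V = zero_set (L \<inter> affine hull E) (qpoly Q b c)"
    unfolding V_def zero_set_def by auto
  with E show ?thesis unfolding V_def by simp
qed

lemma affine_translation_through_point:
  fixes A :: "'a::real_vector set"
  assumes "affine A" and "w \<in> A" and "u + w \<in> (\<lambda>x. t + x) ` A"
  shows "(\<lambda>x. t + x) ` A = (\<lambda>x. u + x) ` A"
proof -
  have shifted: "u + w - t \<in> A" using assms(3) by auto
  have "x - t \<in> A \<longleftrightarrow> x - u \<in> A" for x
  proof
    assume "x - t \<in> A"
    from mem_affine_3_minus[OF assms(1) this assms(2) shifted, of 1]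
    show "x - u \<in> A" by (simp add: algebra_simps)
  next
    assume "x - u \<in> A"
    from mem_affine_3_minus[OF assms(1) this shifted assms(2), of 1]
    show "x - t \<in> A" by (simp add: algebra_simps)
  qed
  then show ?thesis by (force simp: image_iff algebra_simps)
qed

lemma convex_hull_zero_set_int_lattice_translation:
  assumes "u \<in> int_lattice" and "\<And>x. f (u + x) = f x" and "A' = (\<lambda>x. u + x) ` A"
  shows "convex hull zero_set (int_lattice \<inter> A') f
           = (\<lambda>x. u + x) ` (convex hull zero_set (int_lattice \<inter> A) f)"
proof -
  have "u + x \<in> int_lattice" "x - u \<in> int_lattice" if "x \<in> int_lattice" for x
    using assms(1) that by (auto simp: int_lattice_def)
  then have "(\<lambda>x. u + x) ` int_lattice = int_lattice" by (force simp: image_iff)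
  then have "int_lattice \<inter> A' = (\<lambda>x. u + x) ` (int_lattice \<inter> A)"
    using assms(3) by (simp add: image_Int)
  moreover have "zero_set ((\<lambda>x. u + x) ` S) f = (\<lambda>x. u + x) ` zero_set S f" for S
    using assms(2) unfolding zero_set_def by auto
  ultimately show ?thesis by (simp add: convex_hull_translation)
qed

lemma perfect_delaunay_invariant_form:
  fixes Q :: "real^'n^'n"
  assumes "psd_form Q" and "perfect_delaunay L Q P" and "sublattice G L"
    and "direct_sum_eq (vert L P) W G"
  obtains b c where "vert L P = zero_set L (qpoly Q b c)"
    and "\<And>u x. u \<in> G \<Longrightarrow> qpoly Q b c (u + x) = qpoly Q b c x"
proof -
  obtain b c where nonneg: "\<forall>z\<in>L. 0 \<le> qpoly Q b c z"
    and "zero_set L (qpoly Q b c) \<noteq> {}"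
    and P: "P = convex hull zero_set L (qpoly Q b c)"
    and perfect: "\<forall>A b' c'. (\<forall>z\<in>zero_set L (qpoly Q b c). qpoly A b' c' z = 0) \<longrightarrow>
                    (\<exists>k::real. \<forall>x. qpoly A b' c' x = k * qpoly Q b c x)"
    using assms(2) unfolding perfect_delaunay_def by blast
  define Z where "Z = zero_set L (qpoly Q b c)"
  obtain z\<^sub>0 where "z\<^sub>0 \<in> Z" using \<open>zero_set L (qpoly Q b c) \<noteq> {}\<close> Z_def by blast
  have vert_P: "vert L P = Z"
    using inter_convex_hull_zero_set[OF assms(1) nonneg] unfolding vert_def P Z_def .
  have "qpoly Q b c (u + x) = qpoly Q b c x" if "u \<in> G" for u x
  proof (rule perfect_qpoly_translation_invariant[OF perfect[folded Z_def] \<open>z\<^sub>0 \<in> Z\<close>])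
    show "\<forall>z\<in>Z. qpoly Q b c z = 0" unfolding Z_def zero_set_def by blast
    show "\<forall>z\<in>Z. qpoly Q b c (u + z) = 0"
      using direct_sum_eq_add_mem[OF assms(4,3) _ that] vert_P
      unfolding Z_def zero_set_def by blast
  qed
  with vert_P show ?thesis using that unfolding Z_def by blast
qed

theorem lemma1:
  fixes Q :: "real^'n^'n" and P D D' G :: "(real^'n) set"
  assumes "psd_form Q"
    and "perfect_delaunay int_lattice Q P"
    and "sublattice G int_lattice"
    and "delaunay_polytope_aff int_lattice Q D"
    and "delaunay_polytope_aff int_lattice Q D'"
    and "direct_sum_eq (vert int_lattice P) (vert int_lattice D) G"
    and "direct_sum_eq (vert int_lattice P) (vert int_lattice D') G"
    and "\<exists>t. affine hull D' = (\<lambda>x. t + x) ` (affine hull D)"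
  shows "\<exists>u\<in>G. D' = (\<lambda>x. x + u) ` D"
proof -
  let ?L = "int_lattice :: (real^'n) set"
  obtain b c where vert_P: "vert ?L P = zero_set ?L (qpoly Q b c)"
    and invariant: "\<And>u x. u \<in> G \<Longrightarrow> qpoly Q b c (u + x) = qpoly Q b c x"
    using perfect_delaunay_invariant_form[OF assms(1-3,6)] by blast
  have G_lattice: "G \<subseteq> ?L" and "0 \<in> G" using assms(3) unfolding sublattice_def by auto
  then have "vert ?L D \<subseteq> vert ?L P" "vert ?L D' \<subseteq> vert ?L P"
    using direct_sum_eq_subset assms(6,7) by blast+
  then have "?L \<inter> D \<subseteq> zero_set ?L (qpoly Q b c)" "?L \<inter> D' \<subseteq> zero_set ?L (qpoly Q b c)"
    using vert_P unfolding vert_def by auto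
  then have D: "D = convex hull zero_set (?L \<inter> affine hull D) (qpoly Q b c)"
    and D': "D' = convex hull zero_set (?L \<inter> affine hull D') (qpoly Q b c)"
    using assms(4,5) delaunay_polytope_eq_convex_hull_zero_set
    unfolding delaunay_polytope_aff_def by blast+
  have "D' \<noteq> {}"
    using assms(5) unfolding delaunay_polytope_aff_def by (blast dest: delaunay_polyhedron_nonempty)
  then obtain v where v: "v \<in> zero_set (?L \<inter> affine hull D') (qpoly Q b c)"
    using D' by fastforce
  then have "v \<in> vert ?L P" unfolding vert_P zero_set_def by auto
  then obtain w u where "v = w + u" and w: "w \<in> vert ?L D" and "u \<in> G"
    using assms(6) unfolding direct_sum_eq_def by blast
  obtain t where "affine hull D' = (\<lambda>x. t + x) ` (affine hull D)" using assms(8) by blast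
  moreover have "u + w \<in> affine hull D'"
    using v \<open>v = w + u\<close> unfolding zero_set_def by (auto simp: add.commute)
  moreover have "w \<in> affine hull D" using w hull_subset[of D affine] unfolding vert_def by auto
  ultimately have "affine hull D' = (\<lambda>x. u + x) ` (affine hull D)"
    using affine_translation_through_point[of "affine hull D" w] by simp
  from convex_hull_zero_set_int_lattice_translation[where f = "qpoly Q b c", OF subsetD[OF G_lattice \<open>u \<in> G\<close>] invariant[OF \<open>u \<in> G\<close>] this]
  have "D' = (\<lambda>x. u + x) ` D" by (simp only: D[symmetric] D'[symmetric])
  then show ?thesis using \<open>u \<in> G\<close> unfolding add.commute[of u] by blast
qed

end
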